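(* Let $\mathcal{T}$ be a trim transducer with a single initial state. Then $\mathcal{W}(\mathcal{T})$ and $\mathcal{T}$ are equivalent, i.e. $[\![\mathcal{W}(\mathcal{T})]\!]=[\![\mathcal{T}]\!]$. Moreover, if $\mathcal{T}$ satisfies the weak twinning property, then $\mathcal{W}(\mathcal{T})$ is finite, and it is a multi-transducer.
   Context: $\mathcal{T}=(Q,E,I,F,f)$ is a transducer: finite state set $Q$, initial states $I$, final states $F$, transitions $E\subseteq Q\times\Sigma\times\Gamma^*\times Q$, final output $f:F\to\Gamma^*$; it realises $[\![\mathcal{T}]\!]=\{(u,wf(t)) : i\xrightarrow{u\mid w}t,\ i\in I,\ t\in F\}$ where $i\xrightarrow{u\mid w}t$ is a run reading $u$ and outputting $w$; trim means every state lies on a run from an initial to a final state. A multi-transducer is like a transducer except that the final output function maps final states to finite sets of words, and it realises $\{(u,wx): i\xrightarrow{u\mid w}t,\ x\in f(t)\}$ (possibly with infinitely many states). Determinisation $\bar{\mathcal{D}}(\mathcal{T})$: its states are the finite subsets $U$ of $Q\times\Gamma^*$. For such $U$ and $\sigma\in\Sigma$, let $R_{U,\sigma}=\{(q,uv) : (p,u)\in U,\ (p,\sigma,v,q)\in E\}$, let $w_{U,\sigma}$ be the longest common prefix of the words $\{w : (q,w)\in R_{U,\sigma}\text{ for some }q\}$ (taken to be $\epsilon$ if this set is empty), and $P_{U,\sigma}=\{(q,w) : (q,w_{U,\sigma}w)\in R_{U,\sigma}\}$. The transitions of $\bar{\mathcal{D}}(\mathcal{T})$ are $(U,\sigma,w_{U,\sigma},P_{U,\sigma})$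 for all $U,\sigma$; the initial state is $U_0=I\times\{\epsilon\}$; final states are the $U$ with $U\cap(F\times\Gamma^* )\neq\emptyset$, with final output set $\{wf(q) : q\in F,\ (q,w)\in U\}$. Rank: $n_U$ is the set of strongly connected components of $\mathcal{T}$ reachable from the states $q$ with $(q,w)\in U$ for some $w$. $\bar{\mathcal{W}}(\mathcal{T})$ is obtained from $\bar{\mathcal{D}}(\mathcal{T})$ by removing every transition $(U,\sigma,v,U')$ with $n_{U'}\subsetneq n_U$ and replacing it by the transitions $(U,\sigma,vw,\{(q,\epsilon)\})$ for all $(q,w)\in U'$. The weak determinisation $\mathcal{W}(\mathcal{T})$ is the trim part of $\bar{\mathcal{W}}(\mathcal{T})$ (restriction to states lying on some run from the initial state to a final state). $\Delta(v,w)=v^{-1}w$ in the free group over $\Gamma$. $\mathcal{T}$ satisfies the weak twinning property if for all states $q_1,q_2$, all $u,v\in\Sigma^*$ and $u_1,u_2,v_1,v_2\in\Gamma^*$ with $q_1\xrightarrow{u\mid u_1}q_1$, $q_1\xrightarrow{v\mid v_1}q_1$, $q_1\xrightarrow{u\mid u_2}q_2$, $q_2\xrightarrow{v\mid v_2}q_2$, one has $\Delta(u_1,u_2)=\Delta(u_1v_1,u_2v_2)$. *)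

theory Defs
  imports Main "HOL-Library.Sublist"
begin

record ('q, 'a, 'b) transducer =
  states :: "'q set"
  trans  :: "('q \<times> 'a \<times> 'b list \<times> 'q) set"
  init   :: "'q set"
  final  :: "'q set"
  fout   :: "'q \<Rightarrow> 'b list"

record ('s, 'a, 'b) mtransducer =
  mstates :: "'s set"
  mtrans  :: "('s \<times> 'a \<times> 'b list \<times> 's) set"
  minit   :: "'s set"
  mfinal  :: "'s set"
  mfout   :: "'s \<Rightarrow> 'b list set"

inductive run :: "('s \<times> 'a \<times> 'b list \<times> 's) set \<Rightarrow> 's \<Rightarrow> 'a list \<Rightarrow> 'b list \<Rightarrow> 's \<Rightarrow> bool"
  for E where
  run_nil: "run E p [] [] p"
| run_cons: "(p, \<sigma>, v, q) \<in> E \<Longrightarrow> run E q u w r \<Longrightarrow> run E p (\<sigma> # u) (v @ w) r"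

definition is_transducer :: "('q, 'a, 'b) transducer \<Rightarrow> bool" where
  "is_transducer T \<longleftrightarrow> finite (states T) \<and> finite (trans T)
     \<and> trans T \<subseteq> states T \<times> UNIV \<times> UNIV \<times> states T
     \<and> init T \<subseteq> states T \<and> final T \<subseteq> states T"

definition is_multi_transducer :: "('s, 'a, 'b) mtransducer \<Rightarrow> bool" where
  "is_multi_transducer M \<longleftrightarrow>
     mtrans M \<subseteq> mstates M \<times> UNIV \<times> UNIV \<times> mstates M
     \<and> minit M \<subseteq> mstates M \<and> mfinal M \<subseteq> mstates M
     \<and> (\<forall>q \<in> mfinal M. finite (mfout M q))"

definition realised :: "('q, 'a, 'b) transducer \<Rightarrow> ('a list \<times> 'b list) set" where
  "realised T = {(u, w @ fout T t) | u w i t. i \<in> init T \<and> t \<in> final T \<and> run (trans T) i u w t}"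

definition mrealised :: "('s, 'a, 'b) mtransducer \<Rightarrow> ('a list \<times> 'b list) set" where
  "mrealised M = {(u, w @ x) | u w x i t. i \<in> minit M \<and> t \<in> mfinal M
       \<and> run (mtrans M) i u w t \<and> x \<in> mfout M t}"

definition trim :: "('q, 'a, 'b) transducer \<Rightarrow> bool" where
  "trim T \<longleftrightarrow> (\<forall>q \<in> states T. \<exists>i \<in> init T. \<exists>t \<in> final T. \<exists>u w u' w'.
      run (trans T) i u w q \<and> run (trans T) q u' w' t)"

definition lcp :: "'b list set \<Rightarrow> 'b list" where
  "lcp W = (if W = {} then [] else
     (THE p. (\<forall>w \<in> W. prefix p w) \<and> (\<forall>p'. (\<forall>w \<in> W. prefix p' w) \<longrightarrow> prefix p' p)))"

definition detR :: "('q, 'a, 'b) transducer \<Rightarrow> ('q \<times> 'b list) set \<Rightarrow> 'a \<Rightarrow> ('q \<times> 'b list) set" where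
  "detR T U \<sigma> = {(q, u @ v) | p u v q. (p, u) \<in> U \<and> (p, \<sigma>, v, q) \<in> trans T}"

definition detw :: "('q, 'a, 'b) transducer \<Rightarrow> ('q \<times> 'b list) set \<Rightarrow> 'a \<Rightarrow> 'b list" where
  "detw T U \<sigma> = lcp (snd ` detR T U \<sigma>)"

definition detP :: "('q, 'a, 'b) transducer \<Rightarrow> ('q \<times> 'b list) set \<Rightarrow> 'a \<Rightarrow> ('q \<times> 'b list) set" where
  "detP T U \<sigma> = {(q, w). (q, detw T U \<sigma> @ w) \<in> detR T U \<sigma>}"

definition det_states :: "('q, 'a, 'b) transducer \<Rightarrow> ('q \<times> 'b list) set set" where
  "det_states T = {U. finite U \<and> U \<subseteq> states T \<times> UNIV}"

definition det_trans :: "('q, 'a, 'b) transducer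
    \<Rightarrow> (('q \<times> 'b list) set \<times> 'a \<times> 'b list \<times> ('q \<times> 'b list) set) set" where
  "det_trans T = {(U, \<sigma>, detw T U \<sigma>, detP T U \<sigma>) | U \<sigma>. U \<in> det_states T}"

definition det_final :: "('q, 'a, 'b) transducer \<Rightarrow> ('q \<times> 'b list) set set" where
  "det_final T = {U \<in> det_states T. U \<inter> (final T \<times> UNIV) \<noteq> {}}"

definition det_fout :: "('q, 'a, 'b) transducer \<Rightarrow> ('q \<times> 'b list) set \<Rightarrow> 'b list set" where
  "det_fout T U = {w @ fout T q | q w. q \<in> final T \<and> (q, w) \<in> U}"

definition determinise :: "('q, 'a, 'b) transducer \<Rightarrow> (('q \<times> 'b list) set, 'a, 'b) mtransducer" where
  "determinise T = \<lparr> mstates = det_states T, mtrans = det_trans T,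
      minit = {init T \<times> {[]}}, mfinal = det_final T, mfout = det_fout T \<rparr>"

definition graph_rel :: "('q, 'a, 'b) transducer \<Rightarrow> ('q \<times> 'q) set" where
  "graph_rel T = {(p, q). \<exists>\<sigma> v. (p, \<sigma>, v, q) \<in> trans T}"

definition scc :: "('q, 'a, 'b) transducer \<Rightarrow> 'q \<Rightarrow> 'q set" where
  "scc T q = {p. (q, p) \<in> (graph_rel T)\<^sup>* \<and> (p, q) \<in> (graph_rel T)\<^sup>*}"

definition rank :: "('q, 'a, 'b) transducer \<Rightarrow> ('q \<times> 'b list) set \<Rightarrow> 'q set set" where
  "rank T U = scc T ` ((graph_rel T)\<^sup>* `` (fst ` U))"

definition wtrans :: "('q, 'a, 'b) transducer
    \<Rightarrow> (('q \<times> 'b list) set \<times> 'a \<times> 'b list \<times> ('q \<times> 'b list) set) set" where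
  "wtrans T =
     {(U, \<sigma>, v, U'). (U, \<sigma>, v, U') \<in> det_trans T \<and> \<not> (rank T U' \<subset> rank T U)}
   \<union> {(U, \<sigma>, v @ w, {(q, [])}) | U \<sigma> v U' q w.
        (U, \<sigma>, v, U') \<in> det_trans T \<and> rank T U' \<subset> rank T U \<and> (q, w) \<in> U'}"

definition weak_det_bar :: "('q, 'a, 'b) transducer \<Rightarrow> (('q \<times> 'b list) set, 'a, 'b) mtransducer" where
  "weak_det_bar T = \<lparr> mstates = det_states T, mtrans = wtrans T,
      minit = {init T \<times> {[]}}, mfinal = det_final T, mfout = det_fout T \<rparr>"

definition useful :: "('s, 'a, 'b) mtransducer \<Rightarrow> 's set" where
  "useful M = {s \<in> mstates M. \<exists>i \<in> minit M. \<exists>t \<in> mfinal M. \<exists>u w u' w'.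
      run (mtrans M) i u w s \<and> run (mtrans M) s u' w' t}"

definition trim_part :: "('s, 'a, 'b) mtransducer \<Rightarrow> ('s, 'a, 'b) mtransducer" where
  "trim_part M = \<lparr> mstates = useful M,
      mtrans = mtrans M \<inter> (useful M \<times> UNIV \<times> UNIV \<times> useful M),
      minit = minit M \<inter> useful M, mfinal = mfinal M \<inter> useful M, mfout = mfout M \<rparr>"

definition weak_det :: "('q, 'a, 'b) transducer \<Rightarrow> (('q \<times> 'b list) set, 'a, 'b) mtransducer" where
  "weak_det T = trim_part (weak_det_bar T)"

text \<open>Elements of the free group over 'b are represented by freely reduced words over
  signed letters (x, True) = x and (x, False) = x^{-1}.\<close>
fun freduce :: "('b \<times> bool) list \<Rightarrow> ('b \<times> bool) list" where
  "freduce [] = []"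
| "freduce (x # xs) = (case freduce xs of
       [] \<Rightarrow> [x]
     | y # ys \<Rightarrow> (if fst x = fst y \<and> snd x \<noteq> snd y then ys else x # y # ys))"

definition Delta :: "'b list \<Rightarrow> 'b list \<Rightarrow> ('b \<times> bool) list" where
  "Delta v w = freduce (rev (map (\<lambda>x. (x, False)) v) @ map (\<lambda>x. (x, True)) w)"

definition weak_twinning :: "('q, 'a, 'b) transducer \<Rightarrow> bool" where
  "weak_twinning T \<longleftrightarrow> (\<forall>q1 \<in> states T. \<forall>q2 \<in> states T. \<forall>u v u1 u2 v1 v2.
      run (trans T) q1 u u1 q1 \<and> run (trans T) q1 v v1 q1 \<and>
      run (trans T) q1 u u2 q2 \<and> run (trans T) q2 v v2 q2
      \<longrightarrow> Delta u1 u2 = Delta (u1 @ v1) (u2 @ v2))"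

end

theory Submission
  imports Defs
begin

text \<open>Every run of the weak determinisation from a state \<open>U\<close> shadows a run of \<open>T\<close> from one of the
  branches \<open>(q, y) \<in> U\<close>, and conversely: a rank-decreasing transition is replaced by one reset
  transition per branch, so no branch is ever lost.

  For finiteness, every reachable state \<open>U\<close> is anchored at a state \<open>q\<close> of \<open>T\<close> of the same rank:
  its branches are the outputs of runs from \<open>q\<close> on a common input, they have no common prefix, and
  some branch can return to \<open>q\<close>. Two such runs longer than \<open>|Q|\<^sup>2\<close> contain a common loop; the way
  back to \<open>q\<close> closes it into a cycle, so the weak twinning property allows cutting the loop out
  without changing the delay of the two outputs. Hence all delays between branches, and then all
  branch outputs, are bounded.\<close>

section \<open>Runs\<close>

lemma run_append:
  "run E p u w q \<Longrightarrow> run E q u' w' r \<Longrightarrow> run E p (u @ u') (w @ w') r"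
  by (induction rule: run.induct) (auto intro: run.intros)

lemma run_single: "(p, \<sigma>, v, q) \<in> E \<Longrightarrow> run E p [\<sigma>] v q"
  using run.run_cons[OF _ run.run_nil] by fastforce

lemma run_Nil_iff: "run E p [] w q \<longleftrightarrow> w = [] \<and> q = p"
  by (auto elim: run.cases intro: run.intros)

lemma run_Cons_iff:
  "run E p (\<sigma> # u) w r \<longleftrightarrow> (\<exists>v w' q. (p, \<sigma>, v, q) \<in> E \<and> run E q u w' r \<and> w = v @ w')"
proof
  assume "run E p (\<sigma> # u) w r"
  then show "\<exists>v w' q. (p, \<sigma>, v, q) \<in> E \<and> run E q u w' r \<and> w = v @ w'"
    by (cases rule: run.cases) auto
qed (auto intro: run.intros)

lemma run_mono: "run E p u w q \<Longrightarrow> E \<subseteq> E' \<Longrightarrow> run E' p u w q"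
  by (induction rule: run.induct) (auto intro: run.intros)

lemma run_in_states: "run E p u w q \<Longrightarrow> E \<subseteq> S \<times> UNIV \<times> UNIV \<times> S \<Longrightarrow> p \<in> S \<Longrightarrow> q \<in> S"
  by (induction rule: run.induct) auto

lemma set_run_output: "run E p u w q \<Longrightarrow> set w \<subseteq> (\<Union>(p, \<sigma>, v, q) \<in> E. set v)"
  by (induction rule: run.induct) fastforce+

lemma length_run_output:
  "run E p u w q \<Longrightarrow> \<forall>(p, \<sigma>, v, q) \<in> E. length v \<le> M \<Longrightarrow> length w \<le> length u * M"
  by (induction rule: run.induct) fastforce+

lemma rtrancl_graph_rel_imp_run: "(p, q) \<in> (graph_rel T)\<^sup>* \<Longrightarrow> \<exists>u w. run (trans T) p u w q"
proof (induction rule: converse_rtrancl_induct)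
  case base
  then show ?case by (auto intro: run.intros)
next
  case (step p p')
  then obtain \<sigma> v where "(p, \<sigma>, v, p') \<in> trans T" by (auto simp: graph_rel_def)
  with step.IH show ?case by (auto intro: run.intros)
qed

definition run_through :: "('s \<times> 'a \<times> 'o list \<times> 's) set \<Rightarrow> 's \<Rightarrow> 'a list \<Rightarrow> 'o list \<Rightarrow> 's \<Rightarrow> 's \<Rightarrow> bool"
  where "run_through E p u w r m \<longleftrightarrow>
    (\<exists>a b wa wb. u = a @ b \<and> w = wa @ wb \<and> run E p a wa m \<and> run E m b wb r)"

lemma run_through_start: "run E p u w r \<Longrightarrow> run_through E p u w r p"
  unfolding run_through_def by (metis append_Nil run.run_nil)

lemma run_through_Cons:
  "(p, \<sigma>, v, q) \<in> E \<Longrightarrow> run_through E q u w r m \<Longrightarrow> run_through E p (\<sigma> # u) (v @ w) r m"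
  unfolding run_through_def by (metis append_Cons append_assoc run.run_cons)

definition has_loop :: "('s \<times> 'a \<times> 'o list \<times> 's) set \<Rightarrow> 's \<Rightarrow> 'a list \<Rightarrow> 'o list \<Rightarrow> 's \<Rightarrow> bool"
  where "has_loop E p u w r \<longleftrightarrow> (\<exists>a v b wa wv wb m. u = a @ v @ b \<and> v \<noteq> [] \<and> w = wa @ wv @ wb
    \<and> run E p a wa m \<and> run E m v wv m \<and> run E m b wb r)"

lemma has_loopI:
  "u = a @ v @ b \<Longrightarrow> v \<noteq> [] \<Longrightarrow> w = wa @ wv @ wb \<Longrightarrow>
   run E p a wa m \<Longrightarrow> run E m v wv m \<Longrightarrow> run E m b wb r \<Longrightarrow> has_loop E p u w r"
  unfolding has_loop_def by blast

lemma has_loop_Cons: "(p, \<sigma>, v, q) \<in> E \<Longrightarrow> has_loop E q u w r \<Longrightarrow> has_loop E p (\<sigma> # u) (v @ w) r"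
  unfolding has_loop_def by (metis append_Cons append_assoc run.run_cons)

lemma has_loop_or_distinct_states:
  assumes "run E p u w r"
  shows "has_loop E p u w r
       \<or> (\<exists>V. finite V \<and> card V = Suc (length u) \<and> (\<forall>m \<in> V. run_through E p u w r m))"
  using assms
proof (induction rule: run.induct)
  case (run_nil p)
  have "run_through E p [] [] p p" by (rule run_through_start[OF run.run_nil])
  then show ?case by (intro disjI2 exI[of _ "{p}"]) auto
next
  case (run_cons p \<sigma> v q u w r)
  note step = run_cons.hyps(1)
  from run_cons.IH show ?case
  proof (elim disjE exE conjE)
    assume "has_loop E q u w r"
    then show ?case using has_loop_Cons[OF step] by blast
  next
    fix V
    assume V: "finite V" "card V = Suc (length u)" "\<forall>m \<in> V. run_through E q u w r m"
    show ?case
    proof (cases "p \<in> V")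
      case True
      then obtain a b wa wb where ab: "u = a @ b" "w = wa @ wb" "run E q a wa p" "run E p b wb r"
        using V(3) unfolding run_through_def by blast
      have loop: "run E p (\<sigma> # a) (v @ wa) p" using run.run_cons[OF step ab(3)] .
      have "has_loop E p (\<sigma> # u) (v @ w) r"
        using has_loopI[OF _ _ _ run.run_nil loop ab(4)] ab(1,2) by simp
      then show ?thesis ..
    next
      case False
      have "run_through E p (\<sigma> # u) (v @ w) r p"
        by (rule run_through_start[OF run.run_cons[OF step run_cons.hyps(2)]])
      then have "\<forall>m \<in> insert p V. run_through E p (\<sigma> # u) (v @ w) r m"
        using V(3) run_through_Cons[OF step] by blast
      moreover have "finite (insert p V)" "card (insert p V) = Suc (length (\<sigma> # u))"
        using V(1,2) False by simp_all
      ultimately show ?thesis by blast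
    qed
  qed
qed

lemma run_has_loop:
  assumes "run E p u w r" and "E \<subseteq> S \<times> UNIV \<times> UNIV \<times> S" and "finite S" and "p \<in> S"
    and "card S \<le> length u"
  shows "has_loop E p u w r"
proof -
  have "\<not> (\<exists>V. finite V \<and> card V = Suc (length u) \<and> (\<forall>m \<in> V. run_through E p u w r m))"
  proof
    assume "\<exists>V. finite V \<and> card V = Suc (length u) \<and> (\<forall>m \<in> V. run_through E p u w r m)"
    then obtain V where V: "card V = Suc (length u)" "\<forall>m \<in> V. run_through E p u w r m" by blast
    have "V \<subseteq> S" using V(2) run_in_states[OF _ assms(2,4)] unfolding run_through_def by blast
    then have "card V \<le> card S" using assms(3) by (rule card_mono[rotated])
    with V(1) assms(5) show False by simp
  qed
  with has_loop_or_distinct_states[OF assms(1)] show ?thesis by blast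
qed

text \<open>Two runs on the same input read in lockstep: the output letters of the product are the pairs of
  words emitted by the two components.\<close>
definition sync :: "('s \<times> 'a \<times> 'b list \<times> 's) set
    \<Rightarrow> (('s \<times> 's) \<times> 'a \<times> ('b list \<times> 'b list) list \<times> ('s \<times> 's)) set" where
  "sync E = {((p1, p2), \<sigma>, [(v1, v2)], (q1, q2)) | p1 p2 \<sigma> v1 v2 q1 q2.
     (p1, \<sigma>, v1, q1) \<in> E \<and> (p2, \<sigma>, v2, q2) \<in> E}"

lemma sync_subset: "E \<subseteq> S \<times> UNIV \<times> UNIV \<times> S \<Longrightarrow> sync E \<subseteq> (S \<times> S) \<times> UNIV \<times> UNIV \<times> (S \<times> S)"
  by (auto simp: sync_def)

lemma run_sync_imp_runs:
  assumes "run (sync E) (p1, p2) u ws (r1, r2)"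
  shows "run E p1 u (concat (map fst ws)) r1" and "run E p2 u (concat (map snd ws)) r2"
proof -
  have "run E (fst p) u (concat (map fst ws)) (fst r) \<and> run E (snd p) u (concat (map snd ws)) (snd r)"
    if "run (sync E) p u ws r" for p r
    using that by (induction rule: run.induct) (auto simp: sync_def intro: run.intros)
  with assms show "run E p1 u (concat (map fst ws)) r1" "run E p2 u (concat (map snd ws)) r2"
    by fastforce+
qed

lemma runs_imp_run_sync:
  "run E p1 u w1 r1 \<Longrightarrow> run E p2 u w2 r2 \<Longrightarrow>
   \<exists>ws. run (sync E) (p1, p2) u ws (r1, r2) \<and> w1 = concat (map fst ws) \<and> w2 = concat (map snd ws)"
proof (induction arbitrary: p2 w2 rule: run.induct)
  case (run_nil p)
  then show ?case by (auto simp: run_Nil_iff intro: run.run_nil)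
next
  case (run_cons p \<sigma> v q u w r)
  from run_cons.prems obtain v' w' q' where "(p2, \<sigma>, v', q') \<in> E" "run E q' u w' r2" "w2 = v' @ w'"
    by (auto simp: run_Cons_iff)
  moreover from this(2) obtain ws where "run (sync E) (q, q') u ws (r, r2)"
    "w = concat (map fst ws)" "w' = concat (map snd ws)"
    using run_cons.IH by blast
  moreover have "((p, p2), \<sigma>, [(v, v')], (q, q')) \<in> sync E"
    using run_cons.hyps(1) calculation(1) by (auto simp: sync_def)
  ultimately show ?case using run.run_cons[of "(p, p2)" \<sigma> "[(v, v')]" "(q, q')" "sync E" u ws "(r, r2)"]
    by (intro exI[of _ "(v, v') # ws"]) auto
qed

section \<open>Delays and the free group\<close>

lemma lcp_eq_Longest_common_prefix:
  assumes "W \<noteq> {}"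
  shows "lcp W = Longest_common_prefix W"
proof -
  let ?L = "Longest_common_prefix W"
  have "(\<forall>w \<in> W. prefix ?L w) \<and> (\<forall>d. (\<forall>w \<in> W. prefix d w) \<longrightarrow> prefix d ?L)"
    using assms by (simp add: Longest_common_prefix_prefix Longest_common_prefix_max_prefix)
  then show ?thesis
    unfolding lcp_def using assms by (simp add: the_equality prefix_order.antisym)
qed

lemma lcp_prefix: "w \<in> W \<Longrightarrow> prefix (lcp W) w"
  by (metis empty_iff lcp_eq_Longest_common_prefix Longest_common_prefix_prefix)

lemma lcp_greatest: "W \<noteq> {} \<Longrightarrow> \<forall>w \<in> W. prefix d w \<Longrightarrow> prefix d (lcp W)"
  by (simp add: lcp_eq_Longest_common_prefix Longest_common_prefix_max_prefix)

text \<open>The two words with their longest common prefix removed; \<open>Delta xs ys\<close> is its image in the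
  free group.\<close>
fun delay :: "'b list \<Rightarrow> 'b list \<Rightarrow> 'b list \<times> 'b list" where
  "delay (x # xs) (y # ys) = (if x = y then delay xs ys else (x # xs, y # ys))"
| "delay xs ys = (xs, ys)"

lemma delay_append_same: "delay (g @ xs) (g @ ys) = delay xs ys"
  by (induction g) auto

lemma delay_decomp: "\<exists>g. xs = g @ fst (delay xs ys) \<and> ys = g @ snd (delay xs ys)"
proof (induction xs ys rule: delay.induct)
  case (1 x xs y ys)
  then show ?case by (cases "x = y") (auto intro: exI[of _ "x # _"] exI[of _ "[]"])
qed auto

lemma length_delay:
  "length (fst (delay xs ys)) \<le> length xs" "length (snd (delay xs ys)) \<le> length ys"
  using delay_decomp[of xs ys] by (metis le_add2 length_append)+

lemma delay_append:
  "delay xs ys = delay xs' ys' \<Longrightarrow> delay (xs @ zs) (ys @ zs') = delay (xs' @ zs) (ys' @ zs')"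
proof -
  have "delay (xs @ zs) (ys @ zs') = delay (fst (delay xs ys) @ zs) (snd (delay xs ys) @ zs')" for xs ys
    using delay_decomp[of xs ys] by (metis append.assoc delay_append_same)
  then show "delay xs ys = delay xs' ys' \<Longrightarrow> ?thesis" by metis
qed

abbreviation cancelling :: "'b \<times> bool \<Rightarrow> 'b \<times> bool \<Rightarrow> bool" where
  "cancelling x y \<equiv> fst x = fst y \<and> snd x \<noteq> snd y"

lemma successively_freduce: "successively (\<lambda>x y. \<not> cancelling x y) (freduce xs)"
proof (induction xs)
  case (Cons x xs)
  then show ?case
    by (cases "freduce xs"; cases "tl (freduce xs)") (auto split: if_splits)
qed simp

lemma freduce_eq_self: "successively (\<lambda>x y. \<not> cancelling x y) xs \<Longrightarrow> freduce xs = xs"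
proof (induction xs)
  case (Cons x xs)
  then show ?case by (cases xs) auto
qed simp

lemma freduce_cancel_middle: "freduce (xs @ (x, False) # (x, True) # zs) = freduce (xs @ zs)"
proof (induction xs)
  case Nil
  have "successively (\<lambda>x y. \<not> cancelling x y) (freduce zs)" by (rule successively_freduce)
  then show ?case by (cases "freduce zs"; cases "tl (freduce zs)") (auto simp: prod_eq_iff)
qed simp

abbreviation signed_word :: "'b list \<Rightarrow> 'b list \<Rightarrow> ('b \<times> bool) list" where
  "signed_word xs ys \<equiv> rev (map (\<lambda>x. (x, False)) xs) @ map (\<lambda>x. (x, True)) ys"

lemma signed_word_inj: "signed_word xs ys = signed_word xs' ys' \<Longrightarrow> xs = xs' \<and> ys = ys'"
proof -
  assume eq: "signed_word xs ys = signed_word xs' ys'"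
  have "map (\<lambda>x. (x, True)) ys = map (\<lambda>x. (x, True)) ys'"
    using arg_cong[OF eq, of "filter snd"] by (simp add: rev_filter[symmetric] filter_map comp_def)
  moreover have "map (\<lambda>x. (x, False)) xs = map (\<lambda>x. (x, False)) xs'"
    using arg_cong[OF eq, of "filter (Not \<circ> snd)"] by (simp add: rev_filter[symmetric] filter_map comp_def)
  ultimately show ?thesis by (auto dest: map_injective simp: inj_on_def)
qed

lemma successively_same_sign: "successively (\<lambda>x y. \<not> cancelling x y) (map (\<lambda>x. (x, s)) xs)"
  by (induction xs rule: induct_list012) auto

lemma freduce_signed_word:
  assumes "xs = [] \<or> ys = [] \<or> hd xs \<noteq> hd ys"
  shows "freduce (signed_word xs ys) = signed_word xs ys"
proof (rule freduce_eq_self)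
  have "rev (map (\<lambda>x. (x, False)) xs) = map (\<lambda>x. (x, False)) (rev xs)" by (simp add: rev_map)
  then show "successively (\<lambda>x y. \<not> cancelling x y) (signed_word xs ys)"
    using assms successively_same_sign[of False "rev xs"] successively_same_sign[of True ys]
    by (auto simp: successively_append_iff hd_map last_map last_rev)
qed

lemma Delta_eq_signed_delay: "Delta xs ys = signed_word (fst (delay xs ys)) (snd (delay xs ys))"
proof (induction xs ys rule: delay.induct)
  case (1 x xs y ys)
  show ?case
  proof (cases "x = y")
    case True
    then have "Delta (x # xs) (y # ys) = Delta xs ys"
      using freduce_cancel_middle[of "rev (map (\<lambda>x. (x, False)) xs)" x] by (simp add: Delta_def)
    with True 1 show ?thesis by simp
  next
    case False
    then show ?thesis unfolding Delta_def using freduce_signed_word[of "x # xs" "y # ys"] by simp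
  qed
next
  case ("2_1" ys)
  show ?case using freduce_signed_word[of "[]" ys] by (simp add: Delta_def)
next
  case ("2_2" xs)
  show ?case using freduce_signed_word[of xs "[]"] by (simp add: Delta_def)
qed

lemma Delta_eq_imp_delay_eq: "Delta xs ys = Delta xs' ys' \<Longrightarrow> delay xs ys = delay xs' ys'"
  unfolding Delta_eq_signed_delay by (drule signed_word_inj) (simp add: prod_eq_iff)

section \<open>Equivalence\<close>

lemma detR_iff: "(q, y) \<in> detR T U \<sigma> \<longleftrightarrow> (\<exists>p a b. (p, a) \<in> U \<and> (p, \<sigma>, b, q) \<in> trans T \<and> y = a @ b)"
  by (auto simp: detR_def)

lemma detP_iff: "(q, z) \<in> detP T U \<sigma> \<longleftrightarrow> (q, detw T U \<sigma> @ z) \<in> detR T U \<sigma>"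
  by (simp add: detP_def)

lemma detw_prefix: "(q, y) \<in> detR T U \<sigma> \<Longrightarrow> \<exists>z. y = detw T U \<sigma> @ z"
  unfolding detw_def by (metis image_eqI lcp_prefix prefixE snd_conv)

lemma lcp_detP: "lcp (snd ` detP T U \<sigma>) = []"
proof (cases "detP T U \<sigma> = {}")
  case True
  then show ?thesis by (simp add: lcp_def)
next
  case False
  let ?d = "lcp (snd ` detP T U \<sigma>)"
  have "prefix (detw T U \<sigma> @ ?d) y" if y: "y \<in> snd ` detR T U \<sigma>" for y
  proof -
    obtain q z where "(q, detw T U \<sigma> @ z) \<in> detR T U \<sigma>" "y = detw T U \<sigma> @ z"
      using y detw_prefix by fastforce
    then have "prefix ?d z" by (metis detP_iff image_eqI lcp_prefix snd_conv)
    with \<open>y = detw T U \<sigma> @ z\<close> show ?thesis by simp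
  qed
  moreover have "snd ` detR T U \<sigma> \<noteq> {}" using False by (auto simp: detP_def)
  ultimately have "prefix (detw T U \<sigma> @ ?d) (detw T U \<sigma>)"
    unfolding detw_def by (metis lcp_greatest)
  then show ?thesis by simp
qed

lemma finite_detR: "finite U \<Longrightarrow> finite (trans T) \<Longrightarrow> finite (detR T U \<sigma>)"
proof -
  assume "finite U" "finite (trans T)"
  then have "finite ((\<lambda>((p, a), (p', \<sigma>', b, q)). (q, a @ b)) ` (U \<times> trans T))" by simp
  moreover have "detR T U \<sigma> \<subseteq> (\<lambda>((p, a), (p', \<sigma>', b, q)). (q, a @ b)) ` (U \<times> trans T)"
    by (auto simp: detR_def image_iff) force
  ultimately show ?thesis by (rule finite_subset[rotated])
qed

lemma finite_detP:
  assumes "finite U" and "finite (trans T)"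
  shows "finite (detP T U \<sigma>)"
proof (rule finite_subset)
  show "detP T U \<sigma> \<subseteq> (\<lambda>(q, y). (q, drop (length (detw T U \<sigma>)) y)) ` detR T U \<sigma>"
  proof clarify
    fix q z
    assume "(q, z) \<in> detP T U \<sigma>"
    then have "(q, detw T U \<sigma> @ z) \<in> detR T U \<sigma>" by (simp add: detP_iff)
    then show "(q, z) \<in> (\<lambda>(q, y). (q, drop (length (detw T U \<sigma>)) y)) ` detR T U \<sigma>"
      by (rule rev_image_eqI) simp
  qed
  show "finite ((\<lambda>(q, y). (q, drop (length (detw T U \<sigma>)) y)) ` detR T U \<sigma>)"
    using finite_detR[OF assms] by simp
qed

lemma detP_in_det_states:
  assumes "is_transducer T" and "finite U"
  shows "detP T U \<sigma> \<in> det_states T"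
proof -
  have "detP T U \<sigma> \<subseteq> states T \<times> UNIV"
    using assms(1) by (auto simp: detP_def detR_def is_transducer_def)
  moreover have "finite (trans T)" using assms(1) by (simp add: is_transducer_def)
  ultimately show ?thesis using finite_detP[OF assms(2)] by (simp add: det_states_def)
qed

lemma wtrans_cases[consumes 1, case_names keep reset]:
  assumes "(U, \<sigma>, v, U') \<in> wtrans T"
  obtains (keep) "U \<in> det_states T" "U' = detP T U \<sigma>" "v = detw T U \<sigma>"
    "\<not> rank T (detP T U \<sigma>) \<subset> rank T U"
  | (reset) q w where "U \<in> det_states T" "U' = {(q, [])}" "v = detw T U \<sigma> @ w"
    "(q, w) \<in> detP T U \<sigma>" "rank T (detP T U \<sigma>) \<subset> rank T U"
  using assms by (auto simp: wtrans_def det_trans_def)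

lemma wtrans_keepI:
  "U \<in> det_states T \<Longrightarrow> \<not> rank T (detP T U \<sigma>) \<subset> rank T U
   \<Longrightarrow> (U, \<sigma>, detw T U \<sigma>, detP T U \<sigma>) \<in> wtrans T"
  by (auto simp: wtrans_def det_trans_def)

lemma wtrans_resetI:
  "U \<in> det_states T \<Longrightarrow> rank T (detP T U \<sigma>) \<subset> rank T U \<Longrightarrow> (q, w) \<in> detP T U \<sigma>
   \<Longrightarrow> (U, \<sigma>, detw T U \<sigma> @ w, {(q, [])}) \<in> wtrans T"
  unfolding wtrans_def det_trans_def by blast

lemma wtrans_in_det_states:
  assumes "is_transducer T" and "(U, \<sigma>, v, U') \<in> wtrans T"
  shows "U \<in> det_states T \<and> U' \<in> det_states T"
  using assms(2)
proof (cases rule: wtrans_cases)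
  case keep
  then show ?thesis using detP_in_det_states[OF assms(1)] by (simp add: det_states_def)
next
  case (reset q w)
  then have "q \<in> states T" using assms(1) by (auto simp: detP_def detR_def is_transducer_def)
  with reset show ?thesis by (simp add: det_states_def)
qed

text \<open>Also across reset transitions, each branch of the target extends a branch of the source.\<close>
lemma wtrans_target_in_detR: "(U, \<sigma>, v, U') \<in> wtrans T \<Longrightarrow> (q, y) \<in> U' \<Longrightarrow> (q, v @ y) \<in> detR T U \<sigma>"
  by (induction rule: wtrans_cases) (auto simp: detP_iff)

lemma run_wtrans_imp_run_trans:
  "run (wtrans T) U u w t \<Longrightarrow> t \<in> det_final T \<Longrightarrow> x \<in> det_fout T t \<Longrightarrow>
   \<exists>q y w' t'. (q, y) \<in> U \<and> run (trans T) q u w' t' \<and> t' \<in> final T \<and> w @ x = y @ w' @ fout T t'"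
proof (induction rule: run.induct)
  case (run_nil U)
  then obtain q y where "(q, y) \<in> U" "q \<in> final T" "x = y @ fout T q" by (auto simp: det_fout_def)
  then show ?case using run.run_nil[of "trans T" q] by fastforce
next
  case (run_cons U \<sigma> v U' u w t)
  then obtain q y w' t' where IH: "(q, y) \<in> U'" "run (trans T) q u w' t'" "t' \<in> final T"
    "w @ x = y @ w' @ fout T t'" by blast
  obtain p a b where "(p, a) \<in> U" "(p, \<sigma>, b, q) \<in> trans T" "v @ y = a @ b"
    using wtrans_target_in_detR[OF run_cons.hyps(1) IH(1)] by (auto simp: detR_iff)
  moreover from this(2) have "run (trans T) p (\<sigma> # u) (b @ w') t'" using IH(2) by (rule run.run_cons)
  moreover have "(v @ w) @ x = a @ (b @ w') @ fout T t'" using IH(4) \<open>v @ y = a @ b\<close> by simp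
  ultimately show ?case using IH(3) by blast
qed

lemma run_trans_imp_run_wtrans:
  assumes "is_transducer T"
  shows "run (trans T) q u w t \<Longrightarrow> t \<in> final T \<Longrightarrow> (q, y) \<in> U \<Longrightarrow> U \<in> det_states T \<Longrightarrow>
    \<exists>w' U' x. run (wtrans T) U u w' U' \<and> U' \<in> det_final T \<and> x \<in> det_fout T U' \<and> w' @ x = y @ w @ fout T t"
proof (induction arbitrary: U y rule: run.induct)
  case (run_nil q)
  then have "U \<in> det_final T" "y @ fout T q \<in> det_fout T U"
    by (auto simp: det_final_def det_fout_def)
  then show ?case using run.run_nil[of "wtrans T" U] by fastforce
next
  case (run_cons q \<sigma> b q' u w t)
  have "(q', y @ b) \<in> detR T U \<sigma>" using run_cons.prems(2) run_cons.hyps(1) by (auto simp: detR_iff)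
  then obtain z where z: "y @ b = detw T U \<sigma> @ z" "(q', z) \<in> detP T U \<sigma>"
    using detw_prefix by (metis detP_iff)
  have U: "U \<in> det_states T" by fact
  show ?case
  proof (cases "rank T (detP T U \<sigma>) \<subset> rank T U")
    case False
    have "detP T U \<sigma> \<in> det_states T"
      using detP_in_det_states[OF assms] U by (simp add: det_states_def)
    with run_cons.IH[OF run_cons.prems(1) z(2)] obtain w' U' x where
      "run (wtrans T) (detP T U \<sigma>) u w' U'" "U' \<in> det_final T" "x \<in> det_fout T U'"
      "w' @ x = z @ w @ fout T t" by blast
    moreover note run.run_cons[OF wtrans_keepI[OF U False] this(1)]
    ultimately show ?thesis using z(1) by (metis append.assoc)
  next
    case True
    have "q' \<in> states T"
      using z(2) assms by (auto simp: detP_def detR_def is_transducer_def)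
    then have "{(q', [])} \<in> det_states T" by (simp add: det_states_def)
    with run_cons.IH[OF run_cons.prems(1), where U = "{(q', [])}" and y = "[]"] obtain w' U' x where
      "run (wtrans T) {(q', [])} u w' U'" "U' \<in> det_final T" "x \<in> det_fout T U'"
      "w' @ x = w @ fout T t" by auto
    moreover note run.run_cons[OF wtrans_resetI[OF U True z(2)] this(1)]
    ultimately show ?thesis using z(1) by (metis append.assoc)
  qed
qed

lemma mrealised_weak_det_bar:
  assumes "is_transducer T" and "init T = {i}"
  shows "mrealised (weak_det_bar T) = realised T"
proof
  show "mrealised (weak_det_bar T) \<subseteq> realised T"
  proof clarify
    fix u wx
    assume "(u, wx) \<in> mrealised (weak_det_bar T)"
    then obtain w x t where "run (wtrans T) {(i, [])} u w t" "t \<in> det_final T" "x \<in> det_fout T t"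
      "wx = w @ x"
      using assms(2) by (auto simp: mrealised_def weak_det_bar_def)
    then show "(u, wx) \<in> realised T"
      using run_wtrans_imp_run_trans assms(2) by (fastforce simp: realised_def)
  qed
next
  show "realised T \<subseteq> mrealised (weak_det_bar T)"
  proof clarify
    fix u wx
    assume "(u, wx) \<in> realised T"
    then obtain w t where run: "run (trans T) i u w t" "t \<in> final T" "wx = w @ fout T t"
      using assms(2) by (auto simp: realised_def)
    have "{(i, [])} \<in> det_states T"
      using assms by (auto simp: det_states_def is_transducer_def)
    then obtain w' U' x where "run (wtrans T) {(i, [])} u w' U'" "U' \<in> det_final T"
      "x \<in> det_fout T U'" "wx = w' @ x"
      using run_trans_imp_run_wtrans[OF assms(1) run(1,2), where U = "{(i, [])}" and y = "[]"] run(3)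
      by auto
    then show "(u, wx) \<in> mrealised (weak_det_bar T)"
      using assms(2) unfolding mrealised_def weak_det_bar_def by auto
  qed
qed

lemma run_imp_run_trim_part:
  assumes M: "mtrans M \<subseteq> mstates M \<times> UNIV \<times> UNIV \<times> mstates M"
    and i: "i \<in> minit M" "i \<in> mstates M" and t: "t \<in> mfinal M"
    and run: "run (mtrans M) i u w t"
  shows "run (mtrans (trim_part M)) i u w t"
proof -
  have "run (mtrans (trim_part M)) s u w f \<and> s \<in> useful M"
    if "run (mtrans M) s u w f" "f \<in> mfinal M" "s \<in> mstates M" "run (mtrans M) i u0 w0 s"
    for s u w f u0 w0
    using that
  proof (induction arbitrary: u0 w0 rule: run.induct)
    case (run_nil s)
    then show ?case using i by (auto simp: useful_def intro: run.intros)
  next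
    case (run_cons s \<sigma> v s' u w f)
    have "run (mtrans M) i (u0 @ [\<sigma>]) (w0 @ v) s'"
      using run_append[OF run_cons.prems(3) run_single[OF run_cons.hyps(1)]] .
    moreover have "s' \<in> mstates M" using run_cons.hyps(1) M by blast
    ultimately have IH: "run (mtrans (trim_part M)) s' u w f" "s' \<in> useful M"
      using run_cons.IH run_cons.prems(1) by blast+
    have "s \<in> useful M"
      using run_cons.prems i run.run_cons[OF run_cons.hyps(1,2)] unfolding useful_def by blast
    with IH have "(s, \<sigma>, v, s') \<in> mtrans (trim_part M)"
      using run_cons.hyps(1) by (simp add: trim_part_def)
    with IH \<open>s \<in> useful M\<close> show ?case using run.run_cons by fast
  qed
  from this[OF run t i(2) run.run_nil] show ?thesis ..
qed

lemma mrealised_trim_part: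
  assumes "mtrans M \<subseteq> mstates M \<times> UNIV \<times> UNIV \<times> mstates M" and "minit M \<subseteq> mstates M"
  shows "mrealised (trim_part M) = mrealised M"
proof
  show "mrealised (trim_part M) \<subseteq> mrealised M"
    unfolding mrealised_def trim_part_def using run_mono by fastforce
next
  show "mrealised M \<subseteq> mrealised (trim_part M)"
  proof clarify
    fix u wx
    assume "(u, wx) \<in> mrealised M"
    then obtain w x i t where r: "i \<in> minit M" "t \<in> mfinal M" "run (mtrans M) i u w t"
      "x \<in> mfout M t" "wx = w @ x" by (auto simp: mrealised_def)
    have iM: "i \<in> mstates M" using r(1) assms(2) by blast
    have "run (mtrans (trim_part M)) i u w t"
      using run_imp_run_trim_part[OF assms(1) r(1) iM r(2,3)] .
    moreover have "i \<in> useful M"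
      unfolding useful_def using iM r(1-3) run.run_nil[of "mtrans M" i] by blast
    moreover have "t \<in> useful M"
      unfolding useful_def using run_in_states[OF r(3) assms(1) iM] r(1-3) run.run_nil[of "mtrans M" t]
      by blast
    ultimately show "(u, wx) \<in> mrealised (trim_part M)"
      using r unfolding mrealised_def trim_part_def by auto
  qed
qed

lemma mrealised_weak_det:
  assumes "is_transducer T" and "init T = {i}"
  shows "mrealised (weak_det T) = realised T"
proof -
  have "minit (weak_det_bar T) \<subseteq> mstates (weak_det_bar T)"
    using assms by (auto simp: weak_det_bar_def det_states_def is_transducer_def)
  moreover have "mtrans (weak_det_bar T) \<subseteq> mstates (weak_det_bar T) \<times> UNIV \<times> UNIV \<times> mstates (weak_det_bar T)"
    using wtrans_in_det_states[OF assms(1)] by (fastforce simp: weak_det_bar_def)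
  ultimately show ?thesis
    unfolding weak_det_def by (simp add: mrealised_trim_part mrealised_weak_det_bar[OF assms])
qed

section \<open>Finiteness under the weak twinning property\<close>

lemma runs_common_loop:
  assumes r1: "run E q u y1 s" and r2: "run E q u y2 p"
    and E: "E \<subseteq> S \<times> UNIV \<times> UNIV \<times> S" and "finite S" and "q \<in> S" and "card (S \<times> S) \<le> length u"
  obtains a v b a1 v1 b1 a2 v2 b2 m1 m2 where "u = a @ v @ b" "v \<noteq> []"
    "y1 = a1 @ v1 @ b1" "run E q a a1 m1" "run E m1 v v1 m1" "run E m1 b b1 s"
    "y2 = a2 @ v2 @ b2" "run E q a a2 m2" "run E m2 v v2 m2" "run E m2 b b2 p"
proof -
  obtain ws where sync: "run (sync E) (q, q) u ws (s, p)"
    and y: "y1 = concat (map fst ws)" "y2 = concat (map snd ws)"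
    using runs_imp_run_sync[OF r1 r2] by blast
  have "has_loop (sync E) (q, q) u ws (s, p)"
    using run_has_loop[OF sync sync_subset[OF E]] assms(4-6) by simp
  then obtain a v b wa wv wb m1 m2 where loop: "u = a @ v @ b" "v \<noteq> []" "ws = wa @ wv @ wb"
    "run (sync E) (q, q) a wa (m1, m2)" "run (sync E) (m1, m2) v wv (m1, m2)"
    "run (sync E) (m1, m2) b wb (s, p)"
    unfolding has_loop_def by force
  show thesis
    using that[OF loop(1,2) _ run_sync_imp_runs(1)[OF loop(4)] run_sync_imp_runs(1)[OF loop(5)]
        run_sync_imp_runs(1)[OF loop(6)] _ run_sync_imp_runs(2)[OF loop(4)]
        run_sync_imp_runs(2)[OF loop(5)] run_sync_imp_runs(2)[OF loop(6)]]
    using y loop(3) by simp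
qed

lemma weak_twinning_delay_loop:
  assumes "weak_twinning T" and "m1 \<in> states T" and "m2 \<in> states T"
    and "run (trans T) m1 c (g @ a1) m1" and "run (trans T) m1 c (g @ a2) m2"
    and "run (trans T) m1 v v1 m1" and "run (trans T) m2 v v2 m2"
  shows "delay a1 a2 = delay (a1 @ v1) (a2 @ v2)"
proof -
  have "Delta (g @ a1) (g @ a2) = Delta ((g @ a1) @ v1) ((g @ a2) @ v2)"
    using assms unfolding weak_twinning_def by blast
  then have "delay (g @ a1) (g @ a2) = delay (g @ a1 @ v1) (g @ a2 @ v2)"
    unfolding append.assoc[symmetric] by (rule Delta_eq_imp_delay_eq)
  then show ?thesis by (simp only: delay_append_same)
qed

lemma short_run_pair_with_same_delay:
  assumes T: "is_transducer T" and wt: "weak_twinning T" and q: "q \<in> states T"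
  shows "run (trans T) q u y1 s \<Longrightarrow> run (trans T) q u y2 p \<Longrightarrow> (s, q) \<in> (graph_rel T)\<^sup>* \<Longrightarrow>
    \<exists>u' y1' y2' s' p'. run (trans T) q u' y1' s' \<and> run (trans T) q u' y2' p'
      \<and> length u' < card (states T \<times> states T) \<and> delay y1 y2 = delay y1' y2'"
proof (induction "length u" arbitrary: u y1 y2 s p rule: less_induct)
  case less
  have E: "trans T \<subseteq> states T \<times> UNIV \<times> UNIV \<times> states T" and S: "finite (states T)"
    using T by (auto simp: is_transducer_def)
  show ?case
  proof (cases "length u < card (states T \<times> states T)")
    case True
    with less.prems show ?thesis by blast
  next
    case False
    then have "card (states T \<times> states T) \<le> length u" by simp
    then obtain a v b a1 v1 b1 a2 v2 b2 m1 m2 where loop: "u = a @ v @ b" "v \<noteq> []"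
      "y1 = a1 @ v1 @ b1" "run (trans T) q a a1 m1" "run (trans T) m1 v v1 m1" "run (trans T) m1 b b1 s"
      "y2 = a2 @ v2 @ b2" "run (trans T) q a a2 m2" "run (trans T) m2 v v2 m2" "run (trans T) m2 b b2 p"
      by (rule runs_common_loop[OF less.prems(1,2) E S q])
    obtain z x where return: "run (trans T) s z x q"
      using rtrancl_graph_rel_imp_run[OF less.prems(3)] by blast
    \<comment> \<open>the way back from \<open>s\<close> to \<open>q\<close> closes \<open>b\<close>, \<open>z\<close>, \<open>a\<close> into cycles at \<open>m1\<close>\<close>
    have cycles: "run (trans T) m1 ((b @ z) @ a) ((b1 @ x) @ a1) m1"
      "run (trans T) m1 ((b @ z) @ a) ((b1 @ x) @ a2) m2"
      using run_append[OF run_append[OF loop(6) return] loop(4)]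
        run_append[OF run_append[OF loop(6) return] loop(8)] .
    have "m1 \<in> states T" "m2 \<in> states T"
      using run_in_states[OF loop(4) E q] run_in_states[OF loop(8) E q] by auto
    then have "delay a1 a2 = delay (a1 @ v1) (a2 @ v2)"
      by (rule weak_twinning_delay_loop[OF wt _ _ cycles loop(5,9)])
    then have "delay (a1 @ b1) (a2 @ b2) = delay ((a1 @ v1) @ b1) ((a2 @ v2) @ b2)"
      by (rule delay_append)
    also have "\<dots> = delay y1 y2" using loop(3,7) by simp
    finally have "delay (a1 @ b1) (a2 @ b2) = delay y1 y2" .
    moreover have "length (a @ b) < length u" using loop(1,2) by simp
    moreover have "run (trans T) q (a @ b) (a1 @ b1) s" "run (trans T) q (a @ b) (a2 @ b2) p"
      using run_append[OF loop(4,6)] run_append[OF loop(8,10)] .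
    ultimately show ?thesis using less.hyps less.prems(3) by metis
  qed
qed

definition max_output_length :: "('q, 'a, 'b) transducer \<Rightarrow> nat" where
  "max_output_length T = Max (insert 0 ((\<lambda>(p, \<sigma>, v, q). length v) ` trans T))"

definition delay_bound :: "('q, 'a, 'b) transducer \<Rightarrow> nat" where
  "delay_bound T = card (states T \<times> states T) * max_output_length T"

definition output_alphabet :: "('q, 'a, 'b) transducer \<Rightarrow> 'b set" where
  "output_alphabet T = (\<Union>(p, \<sigma>, v, q) \<in> trans T. set v)"

lemma length_output_le_max_output_length:
  assumes "is_transducer T"
  shows "\<forall>(p, \<sigma>, v, q) \<in> trans T. length v \<le> max_output_length T"
proof clarify
  fix p \<sigma> v q
  assume "(p, \<sigma>, v, q) \<in> trans T"
  moreover have "finite (trans T)" using assms by (simp add: is_transducer_def)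
  ultimately show "length v \<le> max_output_length T"
    unfolding max_output_length_def by (intro Max_ge) force+
qed

lemma length_short_run_output:
  assumes "is_transducer T" and "run (trans T) q u y s" and "length u < card (states T \<times> states T)"
  shows "length y \<le> delay_bound T"
proof -
  have "length y \<le> length u * max_output_length T"
    using length_run_output[OF assms(2) length_output_le_max_output_length[OF assms(1)]] .
  also have "\<dots> \<le> delay_bound T" unfolding delay_bound_def using assms(3) by simp
  finally show ?thesis .
qed

lemma length_le_if_delay_bounded:
  assumes "xr \<in> X" and "x \<in> X" and "lcp X = []"
    and bounded: "\<forall>y \<in> X. length (fst (delay xr y)) \<le> K \<and> length (snd (delay xr y)) \<le> K"
  shows "length x \<le> 2 * K"
proof -
  \<comment> \<open>all of \<open>X\<close> shares the prefix of \<open>xr\<close> of length \<open>|xr| - K\<close>, which \<open>lcp X = []\<close> forces to be empty\<close>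
  let ?d = "take (length xr - K) xr"
  have "prefix ?d y" if y: "y \<in> X" for y
  proof -
    obtain g where g: "xr = g @ fst (delay xr y)" "y = g @ snd (delay xr y)"
      using delay_decomp by blast
    have "length xr = length g + length (fst (delay xr y))" using g(1) by (metis length_append)
    then have "length xr - K \<le> length g" using bounded y by fastforce
    then have "?d = take (length xr - K) g" by (subst (2) g(1)) simp
    then have "prefix ?d g" by (simp add: take_is_prefix)
    with g(2) show ?thesis by (metis prefix_append)
  qed
  then have "prefix ?d (lcp X)" using assms(1) by (intro lcp_greatest) auto
  then have "length xr \<le> K" using assms(3) by auto
  obtain g where g: "xr = g @ fst (delay xr x)" "x = g @ snd (delay xr x)"
    using delay_decomp by blast
  have "length g \<le> length xr" using arg_cong[OF g(1), of length] by simp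
  moreover have "length x = length g + length (snd (delay xr x))"
    using arg_cong[OF g(2), of length] by simp
  ultimately show ?thesis using \<open>length xr \<le> K\<close> bounded assms(2) by fastforce
qed

lemma rank_detP_subset: "rank T (detP T U \<sigma>) \<subseteq> rank T U"
proof -
  have "fst ` detP T U \<sigma> \<subseteq> graph_rel T `` (fst ` U)"
    by (force simp: detP_iff detR_iff graph_rel_def)
  then have "(graph_rel T)\<^sup>* `` (fst ` detP T U \<sigma>) \<subseteq> (graph_rel T)\<^sup>* `` (fst ` U)"
    by (blast intro: converse_rtrancl_into_rtrancl)
  then show ?thesis unfolding rank_def by (rule image_mono)
qed

text \<open>The rank condition guarantees that some branch of \<open>U\<close> can return to \<open>q\<close>.\<close>
definition anchored :: "('q, 'a, 'b) transducer \<Rightarrow> ('q \<times> 'b list) set \<Rightarrow> bool" where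
  "anchored T U \<longleftrightarrow> lcp (snd ` U) = [] \<and> (\<exists>q \<in> states T. rank T U = rank T {(q, [])}
     \<and> (\<exists>u c. \<forall>p x. (p, x) \<in> U \<longrightarrow> run (trans T) q u (c @ x) p))"

text \<open>A non-reset transition keeps the rank: it cannot drop strictly, and \<open>detP\<close> never enlarges it.\<close>
lemma anchored_wtrans:
  assumes "is_transducer T" and tr: "(U, \<sigma>, v, U') \<in> wtrans T" and "anchored T U"
  shows "anchored T U'"
  using tr
proof (cases rule: wtrans_cases)
  case keep
  from \<open>anchored T U\<close> obtain q u c where q: "q \<in> states T" "rank T U = rank T {(q, [])}"
    and runs: "\<forall>p x. (p, x) \<in> U \<longrightarrow> run (trans T) q u (c @ x) p"
    unfolding anchored_def by blast
  have "rank T U' = rank T {(q, [])}" using keep q(2) rank_detP_subset[of T U \<sigma>] by blast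
  moreover have "\<forall>p' y. (p', y) \<in> U' \<longrightarrow> run (trans T) q (u @ [\<sigma>]) ((c @ v) @ y) p'"
  proof (intro allI impI)
    fix p' y
    assume y: "(p', y) \<in> U'"
    obtain p a b where step: "(p, a) \<in> U" "(p, \<sigma>, b, p') \<in> trans T" "v @ y = a @ b"
      using wtrans_target_in_detR[OF tr y] by (auto simp: detR_iff)
    have "run (trans T) q (u @ [\<sigma>]) ((c @ a) @ b) p'"
      using run_append[OF runs[rule_format, OF step(1)] run_single[OF step(2)]] .
    moreover have "(c @ v) @ y = (c @ a) @ b" using step(3) by simp
    ultimately show "run (trans T) q (u @ [\<sigma>]) ((c @ v) @ y) p'" by (simp only:)
  qed
  moreover have "lcp (snd ` U') = []" using keep(2) lcp_detP by simp
  ultimately show ?thesis unfolding anchored_def using q(1) by blast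
next
  case (reset q w)
  then have "q \<in> states T" using assms(1) by (auto simp: detP_def detR_def is_transducer_def)
  moreover have "lcp (snd ` {(q, [])}) = []" by (simp add: lcp_def)
  ultimately show ?thesis using reset(2) run.run_nil[of "trans T" q] unfolding anchored_def by auto
qed

lemma anchored_run_wtrans:
  "run (wtrans T) U u w U' \<Longrightarrow> is_transducer T \<Longrightarrow> anchored T U \<Longrightarrow> anchored T U'"
  by (induction rule: run.induct) (auto intro: anchored_wtrans)

lemma anchored_bounded:
  assumes T: "is_transducer T" and wt: "weak_twinning T" and "anchored T U" and px: "(p, x) \<in> U"
  shows "length x \<le> 2 * delay_bound T \<and> set x \<subseteq> output_alphabet T"
proof -
  from \<open>anchored T U\<close> obtain q u c where lcp: "lcp (snd ` U) = []"
    and q: "q \<in> states T" "rank T U = rank T {(q, [])}"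
    and runs: "\<forall>p x. (p, x) \<in> U \<longrightarrow> run (trans T) q u (c @ x) p"
    unfolding anchored_def by blast
  have "scc T q \<in> rank T U" using q(2) by (simp add: rank_def)
  then obtain s p' where s: "s \<in> fst ` U" "(s, p') \<in> (graph_rel T)\<^sup>*" "scc T p' = scc T q"
    unfolding rank_def by auto
  then have "(p', q) \<in> (graph_rel T)\<^sup>*" by (metis (no_types, lifting) mem_Collect_eq rtrancl.rtrancl_refl scc_def)
  with s(2) have return: "(s, q) \<in> (graph_rel T)\<^sup>*" by simp
  obtain xr where xr: "(s, xr) \<in> U" using s(1) by auto
  have bounded: "length (fst (delay xr y)) \<le> delay_bound T \<and> length (snd (delay xr y)) \<le> delay_bound T"
    if y: "y \<in> snd ` U" for y
  proof -
    obtain p'' where "(p'', y) \<in> U" using y by auto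
    from short_run_pair_with_same_delay[OF T wt q(1) runs[rule_format, OF xr] runs[rule_format, OF this] return]
    obtain u' y1 y2 s' p' where "run (trans T) q u' y1 s'" "run (trans T) q u' y2 p'"
      "length u' < card (states T \<times> states T)" "delay xr y = delay y1 y2"
      by (auto simp: delay_append_same)
    then show ?thesis using length_short_run_output[OF T] length_delay[of y1 y2] by (metis order.trans)
  qed
  have xrU: "xr \<in> snd ` U" using xr by (rule rev_image_eqI) simp
  have xU: "x \<in> snd ` U" using px by (rule rev_image_eqI) simp
  have "length x \<le> 2 * delay_bound T"
    using bounded by (intro length_le_if_delay_bounded[OF xrU xU lcp]) blast
  moreover have "set x \<subseteq> output_alphabet T"
    using set_run_output[OF runs[rule_format, OF px]] by (simp add: output_alphabet_def)
  ultimately show ?thesis ..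
qed

lemma run_wtrans_from_empty: "run (wtrans T) U u w U' \<Longrightarrow> U = {} \<Longrightarrow> U' = {}"
proof (induction rule: run.induct)
  case (run_cons U \<sigma> v U'' u w U')
  have "detP T {} \<sigma> = {}" by (simp add: detP_def detR_def)
  with run_cons show ?case by (auto elim: wtrans_cases)
qed simp

lemma useful_weak_det_bar_nonempty: "U \<in> useful (weak_det_bar T) \<Longrightarrow> U \<noteq> {}"
  using run_wtrans_from_empty by (fastforce simp: useful_def weak_det_bar_def det_final_def)

lemma finite_useful_weak_det_bar:
  assumes T: "is_transducer T" and wt: "weak_twinning T" and "init T = {i}"
  shows "finite (useful (weak_det_bar T))"
proof -
  let ?X = "states T \<times> {xs. set xs \<subseteq> output_alphabet T \<and> length xs \<le> 2 * delay_bound T}"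
  have "finite (output_alphabet T)" "finite (states T)"
    using T by (auto simp: output_alphabet_def is_transducer_def)
  then have "finite ?X" using finite_lists_length_le by blast
  moreover have "useful (weak_det_bar T) \<subseteq> Pow ?X"
  proof
    fix U
    assume "U \<in> useful (weak_det_bar T)"
    then have U: "U \<in> det_states T" "\<exists>u w. run (wtrans T) {(i, [])} u w U"
      using assms(3) by (auto simp: useful_def weak_det_bar_def)
    have "anchored T {(i, [])}"
      using T assms(3) run.run_nil[of "trans T" i] by (auto simp: anchored_def lcp_def is_transducer_def)
    then have "anchored T U" using U(2) anchored_run_wtrans[OF _ T] by blast
    with U(1) show "U \<in> Pow ?X" using anchored_bounded[OF T wt] by (auto simp: det_states_def)
  qed
  ultimately show ?thesis by (meson finite_Pow_iff finite_subset)
qed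

lemma finite_wtrans_to_nonempty:
  assumes T: "is_transducer T" and "finite A" and "A \<subseteq> det_states T"
  shows "finite {(U, \<sigma>, v, U') \<in> wtrans T. U \<in> A \<and> U' \<noteq> {}}"
proof (rule finite_subset)
  let ?\<Sigma> = "(\<lambda>(p, \<sigma>, v, q). \<sigma>) ` trans T"
  let ?out = "\<lambda>U \<sigma>. insert (U, \<sigma>, detw T U \<sigma>, detP T U \<sigma>)
      ((\<lambda>(q, w). (U, \<sigma>, detw T U \<sigma> @ w, {(q, [])})) ` detP T U \<sigma>)"
  show "{(U, \<sigma>, v, U') \<in> wtrans T. U \<in> A \<and> U' \<noteq> {}} \<subseteq> (\<Union>U \<in> A. \<Union>\<sigma> \<in> ?\<Sigma>. ?out U \<sigma>)"
  proof clarify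
    fix U \<sigma> v U'
    assume tr: "(U, \<sigma>, v, U') \<in> wtrans T" and "U \<in> A" "U' \<noteq> {}"
    then obtain q y where "(q, y) \<in> U'" by auto
    then have "\<sigma> \<in> ?\<Sigma>" using wtrans_target_in_detR[OF tr] by (force simp: detR_iff)
    moreover from tr have "(U, \<sigma>, v, U') \<in> ?out U \<sigma>" by (cases rule: wtrans_cases) auto
    ultimately show "(U, \<sigma>, v, U') \<in> (\<Union>U \<in> A. \<Union>\<sigma> \<in> ?\<Sigma>. ?out U \<sigma>)" using \<open>U \<in> A\<close> by blast
  qed
  have "finite (detP T U \<sigma>)" if "U \<in> A" for U \<sigma>
  proof (rule finite_detP)
    show "finite U" using that assms(3) by (auto simp: det_states_def)
    show "finite (trans T)" using T by (simp add: is_transducer_def)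
  qed
  then show "finite (\<Union>U \<in> A. \<Union>\<sigma> \<in> ?\<Sigma>. ?out U \<sigma>)"
    using assms(1,2) by (simp add: is_transducer_def)
qed

lemma is_multi_transducer_weak_det: "is_multi_transducer (weak_det T)"
proof -
  have "finite (det_fout T U)" if "U \<in> det_final T" for U
  proof -
    have "det_fout T U \<subseteq> (\<lambda>(q, w). w @ fout T q) ` U" by (force simp: det_fout_def)
    moreover have "finite U" using that by (simp add: det_final_def det_states_def)
    ultimately show ?thesis by (meson finite_imageI finite_subset)
  qed
  then show ?thesis
    by (auto simp: is_multi_transducer_def weak_det_def trim_part_def weak_det_bar_def)
qed

lemma finite_weak_det:
  assumes T: "is_transducer T" and wt: "weak_twinning T" and i: "init T = {i}"
  shows "finite (mstates (weak_det T)) \<and> finite (mtrans (weak_det T))"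
proof -
  have useful: "finite (useful (weak_det_bar T))"
    using finite_useful_weak_det_bar[OF T wt i] .
  moreover have "useful (weak_det_bar T) \<subseteq> det_states T"
    by (auto simp: useful_def weak_det_bar_def)
  ultimately have "finite {(U, \<sigma>, v, U') \<in> wtrans T. U \<in> useful (weak_det_bar T) \<and> U' \<noteq> {}}"
    by (rule finite_wtrans_to_nonempty[OF T])
  moreover have "mtrans (weak_det T)
      \<subseteq> {(U, \<sigma>, v, U') \<in> wtrans T. U \<in> useful (weak_det_bar T) \<and> U' \<noteq> {}}"
    using useful_weak_det_bar_nonempty by (auto simp: weak_det_def trim_part_def weak_det_bar_def)
  ultimately show ?thesis using useful by (auto simp: weak_det_def trim_part_def intro: finite_subset)
qed

theorem proposition2:
  fixes T :: "('q, 'a, 'b) transducer"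
  assumes "is_transducer T" and "trim T" and "\<exists>i. init T = {i}"
  shows "mrealised (weak_det T) = realised T
         \<and> (weak_twinning T \<longrightarrow>
              finite (mstates (weak_det T)) \<and> finite (mtrans (weak_det T))
              \<and> is_multi_transducer (weak_det T))"
proof -
  obtain i where i: "init T = {i}" using assms(3) by blast
  show ?thesis
    using mrealised_weak_det[OF assms(1) i] finite_weak_det[OF assms(1) _ i]
      is_multi_transducer_weak_det by blast
qed

end
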